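(* Let $E=\{(s_q,t_q):q\in\omega\}$ be a test and let $T$ be the tree generated by $E$. Then $T$ is a tree with acyclic levels.
   Context: Let $\varphi:\omega\to\omega^2$ be the bijection with inverse $\langle n,p\rangle:=\varphi^{-1}(n,p)=\left(\sum_{k\leq n+p}k\right)+p$, and write $\varphi(q)=((q)_0,(q)_1)$. A set $E\subseteq\bigcup_{q\in\omega}2^q\times 2^q$ is a test if: (a) for each $q\in\omega$ there is a unique $(s_q,t_q)\in E\cap(2^q\times 2^q)$; (b) for all $m,p\in\omega$ and $u\in 2^{<\omega}$ there is $v\in 2^{<\omega}$ with $(s_p0uv,t_p1uv)\in E$ and $(|t_p1uv|-1)_0=m$; (c) for each $n>0$ there are $q<n$ and $w\in 2^{<\omega}$ with $s_n=s_q0w$ and $t_n=t_q1w$. (Juxtaposition denotes concatenation of finite binary sequences.) The tree generated by $E$ is $T:=\{(s,t)\in 2^{<\omega}\times 2^{<\omega}: s=t=\emptyset$ or $\exists q\in\omega\ \exists w\in 2^{<\omega}\ (s,t)=(s_q0w,t_q1w)\}$. A tree $T$ on $2\times 2$ has acyclic levels if for each $p$ the bipartite graph with vertex set $\{(s,0):s\in 2^p\}\cup\{(t,1):t\in 2^p\}$ and edges $\{(s,0),(t,1)\}$ for $(s,t)\in T\cap(2^p\times 2^p)$ is acyclic. *)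

theory Defs
  imports Main
begin

text \<open>Finite binary sequences are \<open>bool list\<close>; False = 0, True = 1.
  The set 2^q is the set of lists of length q.\<close>

definition pair_code :: "nat \<Rightarrow> nat \<Rightarrow> nat" where
  "pair_code n p = (\<Sum>k\<le>n+p. k) + p"

definition pair_decode :: "nat \<Rightarrow> nat \<times> nat" where
  "pair_decode q = (THE np. pair_code (fst np) (snd np) = q)"

definition sq :: "(bool list \<times> bool list) set \<Rightarrow> nat \<Rightarrow> bool list" where
  "sq E q = fst (THE x. x \<in> E \<and> length (fst x) = q \<and> length (snd x) = q)"

definition tq :: "(bool list \<times> bool list) set \<Rightarrow> nat \<Rightarrow> bool list" where
  "tq E q = snd (THE x. x \<in> E \<and> length (fst x) = q \<and> length (snd x) = q)"

definition is_test :: "(bool list \<times> bool list) set \<Rightarrow> bool" where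
  "is_test E \<longleftrightarrow>
     (\<forall>x\<in>E. length (fst x) = length (snd x)) \<and>
     (\<forall>q. \<exists>!x. x \<in> E \<and> length (fst x) = q \<and> length (snd x) = q) \<and>
     (\<forall>m p u. \<exists>v. (sq E p @ [False] @ u @ v, tq E p @ [True] @ u @ v) \<in> E \<and>
                   fst (pair_decode (length (tq E p @ [True] @ u @ v) - 1)) = m) \<and>
     (\<forall>n>0. \<exists>q<n. \<exists>w. sq E n = sq E q @ [False] @ w \<and> tq E n = tq E q @ [True] @ w)"

definition generated_tree :: "(bool list \<times> bool list) set \<Rightarrow> (bool list \<times> bool list) set" where
  "generated_tree E = {(s, t). (s = [] \<and> t = []) \<or>
       (\<exists>q w. s = sq E q @ [False] @ w \<and> t = tq E q @ [True] @ w)}"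

definition is_tree_22 :: "(bool list \<times> bool list) set \<Rightarrow> bool" where
  "is_tree_22 T \<longleftrightarrow> (\<forall>(s, t)\<in>T. length s = length t \<and>
       (\<forall>k\<le>length s. (take k s, take k t) \<in> T))"

text \<open>Edges of the bipartite graph of level p: vertices (s,False) ~ (s,0), (t,True) ~ (t,1).\<close>
definition level_edges :: "(bool list \<times> bool list) set \<Rightarrow> nat \<Rightarrow> (bool list \<times> bool) set set" where
  "level_edges T p = {{(s, False), (t, True)} | s t. (s, t) \<in> T \<and> length s = p \<and> length t = p}"

definition ugraph_acyclic :: "'v set set \<Rightarrow> bool" where
  "ugraph_acyclic Ed \<longleftrightarrow> \<not> (\<exists>cs. length cs \<ge> 3 \<and> distinct cs \<and>
      (\<forall>i<length cs. {cs ! i, cs ! ((i + 1) mod length cs)} \<in> Ed))"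

definition has_acyclic_levels :: "(bool list \<times> bool list) set \<Rightarrow> bool" where
  "has_acyclic_levels T \<longleftrightarrow> (\<forall>p. ugraph_acyclic (level_edges T p))"

end

theory Submission
  imports Defs
begin

text \<open>Every edge of level \<open>p + 1\<close> of the generated tree either is the one new edge
  \<open>(s\<^sub>p0, t\<^sub>p1)\<close>, or is the extension of an edge of level \<open>p\<close> by one common bit.
  Extensions keep the last bit of the vertices, the new edge flips it; since a cycle traverses each
  of its edges once, it cannot use the new edge. Deleting the last bit then maps the cycle
  injectively onto a cycle of level \<open>p\<close>, so acyclicity propagates upwards from the two-vertex
  level 0. Closure under restriction comes from condition (c): each \<open>(s\<^sub>q, t\<^sub>q)\<close> with
  \<open>q > 0\<close> is itself an extension of an earlier pair, so induction on \<open>q\<close> applies.\<close>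

lemma test_pair:
  assumes "is_test E"
  shows "(sq E q, tq E q) \<in> E" "length (sq E q) = q" "length (tq E q) = q"
proof -
  have "\<exists>!x. x \<in> E \<and> length (fst x) = q \<and> length (snd x) = q"
    using assms unfolding is_test_def by blast
  from theI'[OF this] show "(sq E q, tq E q) \<in> E" "length (sq E q) = q" "length (tq E q) = q"
    unfolding sq_def tq_def by simp_all
qed

lemma test_pair_extends_earlier:
  assumes "is_test E" "n > 0"
  obtains q w where "q < n" "sq E n = sq E q @ False # w" "tq E n = tq E q @ True # w"
proof -
  have "\<exists>q<n. \<exists>w. sq E n = sq E q @ [False] @ w \<and> tq E n = tq E q @ [True] @ w"
    using assms unfolding is_test_def by blast
  then show thesis
    using that by auto
qed

lemma generated_tree_Nil: "([], []) \<in> generated_tree E"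
  unfolding generated_tree_def by simp

lemma generated_tree_extension: "(sq E q @ False # w, tq E q @ True # w) \<in> generated_tree E"
  unfolding generated_tree_def by simp blast

lemma generated_tree_take_extension:
  assumes "is_test E"
  shows "(take k (sq E q @ False # w), take k (tq E q @ True # w)) \<in> generated_tree E"
proof (induction q arbitrary: k w rule: less_induct)
  case (less q)
  have len: "length (sq E q) = q" "length (tq E q) = q"
    using test_pair[OF assms] by simp_all
  consider "k = 0" | "0 < k" "k \<le> q" | "q < k" by linarith
  then show ?case
  proof cases
    case 1
    then show ?thesis using generated_tree_Nil by simp
  next
    case 2
    obtain q' w' where q': "q' < q" "sq E q = sq E q' @ False # w'" "tq E q = tq E q' @ True # w'"
      using test_pair_extends_earlier[OF assms, of q] 2 by auto
    have "take k (sq E q @ False # w) = take k (sq E q' @ False # w')"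
         "take k (tq E q @ True # w) = take k (tq E q' @ True # w')"
      using 2 len by (simp_all add: q'(2,3)[symmetric])
    then show ?thesis using less.IH[OF q'(1)] by simp
  next
    case 3
    then have "take k (sq E q @ False # w) = sq E q @ False # take (k - Suc q) w"
              "take k (tq E q @ True # w) = tq E q @ True # take (k - Suc q) w"
      using len by (simp_all add: take_Cons')
    then show ?thesis using generated_tree_extension by metis
  qed
qed

lemma is_tree_22_generated_tree:
  assumes "is_test E"
  shows "is_tree_22 (generated_tree E)"
  unfolding is_tree_22_def
proof (intro ballI, clarify)
  fix s t assume "(s, t) \<in> generated_tree E"
  then consider "s = []" "t = []" | q w where "s = sq E q @ False # w" "t = tq E q @ True # w"
    unfolding generated_tree_def by auto
  then show "length s = length t \<and> (\<forall>k\<le>length s. (take k s, take k t) \<in> generated_tree E)"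
  proof cases
    case 1
    then show ?thesis using generated_tree_Nil by simp
  next
    case 2
    then show ?thesis
      using test_pair[OF assms] generated_tree_take_extension[OF assms] by simp
  qed
qed

definition cycle_edge :: "'v list \<Rightarrow> nat \<Rightarrow> 'v set" where
  "cycle_edge cs i = {cs ! i, cs ! (Suc i mod length cs)}"

definition is_cycle :: "'v set set \<Rightarrow> 'v list \<Rightarrow> bool" where
  "is_cycle Ed cs \<longleftrightarrow> 3 \<le> length cs \<and> distinct cs \<and> (\<forall>i<length cs. cycle_edge cs i \<in> Ed)"

lemma ugraph_acyclic_iff_no_cycle: "ugraph_acyclic Ed \<longleftrightarrow> (\<nexists>cs. is_cycle Ed cs)"
  by (simp add: ugraph_acyclic_def is_cycle_def cycle_edge_def)

lemma is_cycle_Suc_mod: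
  assumes "is_cycle Ed cs" "i < length cs"
  shows "Suc i mod length cs < length cs" "Suc i mod length cs \<noteq> i"
  using assms by (auto simp: is_cycle_def mod_Suc)

lemma cycle_edge_inj:
  assumes "is_cycle Ed cs" "i < length cs" "j < length cs" "cycle_edge cs i = cycle_edge cs j"
  shows "i = j"
proof (rule ccontr)
  assume "i \<noteq> j"
  define n where "n = length cs"
  have n: "3 \<le> n" "distinct cs" using assms(1) by (simp_all add: is_cycle_def n_def)
  have succ: "Suc k mod n < n" "Suc k mod n \<noteq> k" if "k < n" for k
    using is_cycle_Suc_mod[OF assms(1)] that n_def by simp_all
  have nth_inj: "a = b" if "a < n" "b < n" "cs ! a = cs ! b" for a b
    using that n(2) nth_eq_iff_index_eq n_def by blast
  have "cs ! i \<in> {cs ! j, cs ! (Suc j mod n)}" "cs ! (Suc i mod n) \<in> {cs ! j, cs ! (Suc j mod n)}"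
    using assms(4) by (auto simp: cycle_edge_def n_def)
  with \<open>i \<noteq> j\<close> have "i = Suc j mod n" "Suc i mod n = j"
    using nth_inj succ assms(2,3) n_def by blast+
  then have "Suc (Suc i) mod n = i"
    by (metis mod_Suc_eq)
  with assms(2) n(1) show False
    by (cases "Suc (Suc i) < n") (auto simp: n_def le_mod_geq)
qed

lemma cyclic_step_eq_if_others:
  fixes h :: "nat \<Rightarrow> 'a"
  assumes "i < n" and others: "\<And>j. j < n \<Longrightarrow> j \<noteq> i \<Longrightarrow> h j = h (Suc j mod n)"
  shows "h i = h (Suc i mod n)"
proof -
  have "h (Suc i mod n) = h ((Suc i + k) mod n)" if "k < n" for k
    using that
  proof (induction k)
    case (Suc k)
    have "(Suc i + k) mod n \<noteq> i"
      using Suc.prems assms(1) by (cases "Suc i + k < n") (auto simp: le_mod_geq)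
    then have "h ((Suc i + k) mod n) = h (Suc ((Suc i + k) mod n) mod n)"
      using others Suc.prems by simp
    then show ?case
      using Suc by (simp add: mod_Suc_eq)
  qed simp
  from this[of "n - 1"] show ?thesis
    using assms(1) by simp
qed

lemma cyclic_steps_eq_const:
  fixes h :: "nat \<Rightarrow> 'a"
  assumes "\<And>j. j < n \<Longrightarrow> h j = h (Suc j mod n)" "k < n"
  shows "h k = h 0"
  using assms(2)
proof (induction k)
  case (Suc k)
  then show ?case using assms(1)[of k] by simp
qed simp

lemma is_cycle_map:
  assumes "is_cycle Ed cs" "inj_on g (set cs)" "\<And>i. i < length cs \<Longrightarrow> g ` cycle_edge cs i \<in> Ed'"
  shows "is_cycle Ed' (map g cs)"
proof -
  have "cycle_edge (map g cs) i = g ` cycle_edge cs i" if "i < length cs" for i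
  proof -
    have "Suc i mod length cs < length cs"
      using that by (intro mod_less_divisor) auto
    then show ?thesis
      using that by (simp add: cycle_edge_def)
  qed
  then show ?thesis
    using assms by (simp add: is_cycle_def distinct_map)
qed

lemma ugraph_acyclic_if_few_vertices:
  assumes "\<Union>Ed \<subseteq> V" "finite V" "card V < 3"
  shows "ugraph_acyclic Ed"
  unfolding ugraph_acyclic_iff_no_cycle
proof
  assume "\<exists>cs. is_cycle Ed cs"
  then obtain cs where cs: "is_cycle Ed cs" ..
  have "set cs \<subseteq> \<Union>Ed"
  proof
    fix v assume "v \<in> set cs"
    then obtain i where "i < length cs" "v = cs ! i"
      by (auto simp: in_set_conv_nth)
    then show "v \<in> \<Union>Ed"
      using cs by (auto simp: is_cycle_def cycle_edge_def)
  qed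
  then have "card (set cs) \<le> card V"
    using assms by (meson card_mono order_trans)
  with cs assms(3) show False
    by (simp add: is_cycle_def distinct_card)
qed

lemma level_edges_vertex_length: "e \<in> level_edges T p \<Longrightarrow> v \<in> e \<Longrightarrow> length (fst v) = p"
  by (auto simp: level_edges_def)

definition branch_edge :: "(bool list \<times> bool list) set \<Rightarrow> nat \<Rightarrow> (bool list \<times> bool) set" where
  "branch_edge E p = {(sq E p @ [False], False), (tq E p @ [True], True)}"

definition vertex_butlast :: "bool list \<times> bool \<Rightarrow> bool list \<times> bool" where
  "vertex_butlast v = (butlast (fst v), snd v)"

lemma inj_on_vertex_butlast:
  assumes "\<And>v. v \<in> V \<Longrightarrow> fst v \<noteq> []" "\<And>v. v \<in> V \<Longrightarrow> last (fst v) = a"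
  shows "inj_on vertex_butlast V"
proof (rule inj_onI)
  fix v w assume vw: "v \<in> V" "w \<in> V" and eq: "vertex_butlast v = vertex_butlast w"
  have "fst v = butlast (fst v) @ [last (fst v)]"
    using assms(1) vw(1) by simp
  also have "\<dots> = butlast (fst w) @ [last (fst w)]"
    using eq assms(2)[OF vw(1)] assms(2)[OF vw(2)] by (simp add: vertex_butlast_def)
  also have "\<dots> = fst w"
    using assms(1) vw(2) by simp
  finally have "fst v = fst w" .
  with eq show "v = w"
    by (simp add: vertex_butlast_def prod_eq_iff)
qed

lemma level_edge_Suc_cases:
  assumes "is_test E" "e \<in> level_edges (generated_tree E) (Suc p)"
  shows "e = branch_edge E p \<or>
    (\<exists>a. \<forall>v\<in>e. last (fst v) = a) \<and> vertex_butlast ` e \<in> level_edges (generated_tree E) p"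
proof -
  obtain s t where e: "e = {(s, False), (t, True)}" "(s, t) \<in> generated_tree E"
      "length s = Suc p" "length t = Suc p"
    using assms(2) by (auto simp: level_edges_def)
  then obtain q w where st: "s = sq E q @ False # w" "t = tq E q @ True # w"
    by (auto simp: generated_tree_def)
  have len: "length (sq E q) = q" "length (tq E q) = q"
    using test_pair[OF assms(1)] by simp_all
  show ?thesis
  proof (cases w rule: rev_cases)
    case Nil
    then show ?thesis
      using e st len by (simp add: branch_edge_def)
  next
    case (snoc w' a)
    have "vertex_butlast ` e = {(sq E q @ False # w', False), (tq E q @ True # w', True)}"
      using e(1) st snoc by (simp add: vertex_butlast_def butlast_append)
    moreover have "length (sq E q @ False # w') = p" "length (tq E q @ True # w') = p"
      using e(3) st snoc len by simp_all
    ultimately have "vertex_butlast ` e \<in> level_edges (generated_tree E) p"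
      unfolding level_edges_def using generated_tree_extension by blast
    moreover have "\<forall>v\<in>e. last (fst v) = a"
      using e(1) st snoc by simp
    ultimately show ?thesis by blast
  qed
qed

lemma level_acyclic_Suc:
  assumes E: "is_test E" and acyclic: "ugraph_acyclic (level_edges (generated_tree E) p)"
  shows "ugraph_acyclic (level_edges (generated_tree E) (Suc p))"
  unfolding ugraph_acyclic_iff_no_cycle
proof
  let ?L = "level_edges (generated_tree E)"
  assume "\<exists>cs. is_cycle (?L (Suc p)) cs"
  then obtain cs where cyc: "is_cycle (?L (Suc p)) cs" ..
  define n where "n = length cs"
  define h where "h k = last (fst (cs ! k))" for k
  have edge: "cycle_edge cs i \<in> ?L (Suc p)" if "i < n" for i
    using cyc that by (simp add: is_cycle_def n_def)
  have ends: "cs ! i \<in> cycle_edge cs i" "cs ! (Suc i mod n) \<in> cycle_edge cs i" for i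
    by (simp_all add: cycle_edge_def n_def)
  have off_branch: "h i = h (Suc i mod n) \<and> vertex_butlast ` cycle_edge cs i \<in> ?L p"
    if "i < n" "cycle_edge cs i \<noteq> branch_edge E p" for i
    using level_edge_Suc_cases[OF E edge[OF that(1)]] that(2) ends by (auto simp: h_def)
  have on_branch: "h i \<noteq> h (Suc i mod n)" if "i < n" "cycle_edge cs i = branch_edge E p" for i
  proof -
    have "{cs ! i, cs ! (Suc i mod n)} = {(sq E p @ [False], False), (tq E p @ [True], True)}"
      using that(2) by (simp add: cycle_edge_def branch_edge_def n_def)
    then show ?thesis
      by (auto simp: h_def doubleton_eq_iff)
  qed
  have steps: "h i = h (Suc i mod n)" if "i < n" for i
  proof (cases "cycle_edge cs i = branch_edge E p")
    case True
    have "cycle_edge cs j \<noteq> branch_edge E p" if "j < n" "j \<noteq> i" for j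
      using cycle_edge_inj[OF cyc, of i j] True that \<open>i < n\<close> unfolding n_def by auto
    then have others: "h j = h (Suc j mod n)" if "j < n" "j \<noteq> i" for j
      using off_branch that by blast
    show ?thesis
      by (rule cyclic_step_eq_if_others[of i n h, OF \<open>i < n\<close> others])
  qed (use off_branch that in blast)
  have "fst v \<noteq> [] \<and> last (fst v) = h 0" if "v \<in> set cs" for v
  proof -
    from that obtain i where i: "i < n" "cs ! i = v"
      by (auto simp: in_set_conv_nth n_def)
    then have "length (fst v) = Suc p"
      using level_edges_vertex_length[OF edge[OF i(1)] ends(1)] by simp
    moreover have "h i = h 0"
      using cyclic_steps_eq_const[of n h, OF steps i(1)] .
    ultimately show ?thesis
      using i(2) by (auto simp: h_def)
  qed
  then have "inj_on vertex_butlast (set cs)"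
    by (intro inj_on_vertex_butlast) blast+
  moreover have "vertex_butlast ` cycle_edge cs i \<in> ?L p" if "i < n" for i
    using off_branch on_branch steps that by blast
  ultimately have "is_cycle (?L p) (map vertex_butlast cs)"
    using is_cycle_map[OF cyc] unfolding n_def by blast
  with acyclic show False
    unfolding ugraph_acyclic_iff_no_cycle by blast
qed

lemma generated_tree_levels_acyclic:
  assumes "is_test E"
  shows "ugraph_acyclic (level_edges (generated_tree E) p)"
proof (induction p)
  case 0
  have "\<Union>(level_edges (generated_tree E) 0) \<subseteq> {([], False), ([], True)}"
    by (auto simp: level_edges_def)
  then show ?case
    by (rule ugraph_acyclic_if_few_vertices) simp_all
next
  case (Suc p)
  then show ?case
    using level_acyclic_Suc[OF assms] by blast
qed

theorem proposition3p2:
  assumes "is_test E"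
  shows "is_tree_22 (generated_tree E) \<and> has_acyclic_levels (generated_tree E)"
  using is_tree_22_generated_tree[OF assms] generated_tree_levels_acyclic[OF assms]
  unfolding has_acyclic_levels_def by blast

end
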